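(* Let $\Delta=(\Gamma,\mathbf{R})$ be a theory such that $\bigcirc(B/A)\in\mathbf{R}^{\mathrm{o}}$, there is no $r\in\mathbf{R}^{\mathrm{o}}$ with $r\triangleright\bigcirc(B/A)$, and $\Diamond(A\wedge B)\in\Gamma$, where $A,B$ are Boolean formulas. Then $\Delta\mid\sim\bigcirc(B/A)$.
   Context: Boolean formulas over propositional letters; $\models_{\mathrm{PL}}$ classical entailment, $\models_{\mathrm{S5}}$ S5 entailment; $\Diamond A=\neg\Box\neg A$ and $w\models\Box A$ iff $A$ holds at all worlds. A theory is $\Delta=(\Gamma,\mathbf{R})$, $\Gamma$ a finite set of Boolean or alethic formulas, $\mathbf{R}=(\mathbf{R}^{\Rightarrow},\mathbf{R}^{\mathrm{o}})$, $\mathbf{R}^{\Rightarrow}$ a finite (coherent) set of normality conditionals and $\mathbf{R}^{\mathrm{o}}$ a finite set of obligations $\bigcirc(B/A)$ (body $b=A$, head $h=B$). Overriding (relative to $\Gamma$): $r_j\triangleright r_i$ iff (i) $\{h(r_i),h(r_j)\}\cup\Gamma\models_{\mathrm{S5}}\bot$; (ii) $b(r_j)\models_{\mathrm{PL}}b(r_i)$ and $b(r_i)\not\models_{\mathrm{PL}}b(r_j)$; (iii) $\{h(r_i),b(r_j)\}\not\models_{\mathrm{PL}}\bot$. An $\mathbf{R}$-ordered model is $(W,\succeq_N,\succeq_I,v)$ with $W\neq\emptyset$, valuation $v$, $\succeq_N$ the normality total preorder determined by $\mathbf{R}^{\Rightarrow}$ via the lexicographic ranking on falsified conditionals (coherence: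 no nonempty $X\subseteq\mathbf{R}^{\Rightarrow}$ has $\mathrm{m}(X)\models_{\mathrm{PL}}\bigwedge_{r\in X}\neg b(r)$, with $\mathrm{m}(X)=\{A\rightarrow B:A\Rightarrow B\in X\}$; $\mathcal{E}_0=\mathbf{R}^{\Rightarrow}$, $\mathcal{E}_{i+1}=\{A\Rightarrow B\in\mathbf{R}^{\Rightarrow}:\mathrm{m}(\mathcal{E}_i)\models_{\mathrm{PL}}\neg A\}$, $m$ the stabilization index, $\Delta_i=\mathcal{E}_i\setminus\mathcal{E}_{i+1}$, $\Delta_m=\mathcal{E}_m$; $w_1\succeq_N w_2$ iff $\langle|\Delta_{m-1}\cap F(w_1)|,\dots,|\Delta_0\cap F(w_1)|\rangle$ is lexicographically $\le$ that of $w_2$, where $F(w)$ is the set of conditionals in $\mathbf{R}^{\Rightarrow}$ whose body holds and head fails at $w$), and $w_1\succeq_I w_2$ iff $V(w_1)\subseteq V(w_2)$ where $V(w)=\{r_i\in\mathbf{R}^{\mathrm{o}}:w\models b(r_i)\wedge\neg h(r_i)$ and $w\not\models b(r_j)$ for all $r_j\in\mathbf{R}^{\mathrm{o}}$ with $r_j\triangleright r_i\}$. $\max_{\succeq}(X)=\{w\in X:\forall u\in X(u\succeq w\Rightarrow w\succeq u)\}$. Lifting: $U\succeq_I^{s}U'$ iff for every $u'\in U'$ there is $u\in U$ with $u\succeq_I u'$. Truth: $w\models\bigcirc(B/A)$ iff $\max_{\succeq_N}(\Vert A\wedge\neg B\Vert)\not\succeq_I^{s}\max_{\succeq_N}(\Vert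 A\wedge B\Vert)$. $\Delta\mid\sim\varphi$ iff in every $\mathbf{R}$-ordered model every world satisfying all of $\Gamma$ satisfies $\varphi$. *)

theory Defs
  imports Main
begin

datatype 'p form =
    Atom 'p
  | Bot
  | Neg "'p form"
  | Conj "'p form" "'p form"
  | Disj "'p form" "'p form"
  | Impl "'p form" "'p form"
  | Box "'p form"

definition Dia :: "'p form \<Rightarrow> 'p form" where
  "Dia A = Neg (Box (Neg A))"

fun boolean :: "'p form \<Rightarrow> bool" where
  "boolean (Atom p) = True"
| "boolean Bot = True"
| "boolean (Neg A) = boolean A"
| "boolean (Conj A B) = (boolean A \<and> boolean B)"
| "boolean (Disj A B) = (boolean A \<and> boolean B)"
| "boolean (Impl A B) = (boolean A \<and> boolean B)"
| "boolean (Box A) = False"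

text \<open>Truth at a world w of a model with world set W and valuation v
  (universal accessibility, i.e. S5).\<close>
fun msat :: "'w set \<Rightarrow> ('w \<Rightarrow> 'p \<Rightarrow> bool) \<Rightarrow> 'w \<Rightarrow> 'p form \<Rightarrow> bool" where
  "msat W v w (Atom p) = v w p"
| "msat W v w Bot = False"
| "msat W v w (Neg A) = (\<not> msat W v w A)"
| "msat W v w (Conj A B) = (msat W v w A \<and> msat W v w B)"
| "msat W v w (Disj A B) = (msat W v w A \<or> msat W v w B)"
| "msat W v w (Impl A B) = (msat W v w A \<longrightarrow> msat W v w B)"
| "msat W v w (Box A) = (\<forall>u\<in>W. msat W v u A)"

text \<open>Classical evaluation (only meaningful for Boolean formulas).\<close>
fun bval :: "('p \<Rightarrow> bool) \<Rightarrow> 'p form \<Rightarrow> bool" where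
  "bval val (Atom p) = val p"
| "bval val Bot = False"
| "bval val (Neg A) = (\<not> bval val A)"
| "bval val (Conj A B) = (bval val A \<and> bval val B)"
| "bval val (Disj A B) = (bval val A \<or> bval val B)"
| "bval val (Impl A B) = (bval val A \<longrightarrow> bval val B)"
| "bval val (Box A) = bval val A"

definition pl_ent :: "'p form set \<Rightarrow> 'p form \<Rightarrow> bool" where
  "pl_ent X \<phi> = (\<forall>val. (\<forall>\<psi>\<in>X. bval val \<psi>) \<longrightarrow> bval val \<phi>)"

text \<open>S5 entailment, with S5 models given as sets of valuations (worlds are valuations).\<close>
definition s5_ent :: "'p form set \<Rightarrow> 'p form \<Rightarrow> bool" where
  "s5_ent X \<phi> = (\<forall>(W :: ('p \<Rightarrow> bool) set) w. w \<in> W \<longrightarrow>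
      (\<forall>\<psi>\<in>X. msat W (\<lambda>u. u) w \<psi>) \<longrightarrow> msat W (\<lambda>u. u) w \<phi>)"

section \<open>Rules: a normality conditional A \<Rightarrow> B and an obligation O(B/A) are both
  represented as the pair (A, B) = (body, head).\<close>

type_synonym 'p rule = "'p form \<times> 'p form"

abbreviation body :: "'p rule \<Rightarrow> 'p form" where "body r \<equiv> fst r"
abbreviation head :: "'p rule \<Rightarrow> 'p form" where "head r \<equiv> snd r"

definition mat :: "'p rule set \<Rightarrow> 'p form set" where
  "mat X = (\<lambda>r. Impl (body r) (head r)) ` X"

definition coherent :: "'p rule set \<Rightarrow> bool" where
  "coherent Rn = (\<not> (\<exists>X. X \<subseteq> Rn \<and> X \<noteq> {} \<and>
       (\<forall>val. (\<forall>\<psi>\<in>mat X. bval val \<psi>) \<longrightarrow> (\<forall>r\<in>X. bval val (Neg (body r))))))"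

text \<open>Overriding relative to \<Gamma>: overrides \<Gamma> rj ri means rj \<triangleright> ri.\<close>
definition overrides :: "'p form set \<Rightarrow> 'p rule \<Rightarrow> 'p rule \<Rightarrow> bool" where
  "overrides \<Gamma> rj ri =
     (s5_ent ({head ri, head rj} \<union> \<Gamma>) Bot
      \<and> pl_ent {body rj} (body ri) \<and> \<not> pl_ent {body ri} (body rj)
      \<and> \<not> pl_ent {head ri, body rj} Bot)"

primrec Eseq :: "'p rule set \<Rightarrow> nat \<Rightarrow> 'p rule set" where
  "Eseq Rn 0 = Rn"
| "Eseq Rn (Suc i) = {r \<in> Rn. pl_ent (mat (Eseq Rn i)) (Neg (body r))}"

definition stab :: "'p rule set \<Rightarrow> nat" where
  "stab Rn = (LEAST i. Eseq Rn (Suc i) = Eseq Rn i)"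

definition Dlt :: "'p rule set \<Rightarrow> nat \<Rightarrow> 'p rule set" where
  "Dlt Rn i = (if i < stab Rn then Eseq Rn i - Eseq Rn (Suc i) else Eseq Rn (stab Rn))"

definition falsified :: "'p rule set \<Rightarrow> 'w set \<Rightarrow> ('w \<Rightarrow> 'p \<Rightarrow> bool) \<Rightarrow> 'w \<Rightarrow> 'p rule set" where
  "falsified Rn W v w = {r \<in> Rn. msat W v w (body r) \<and> \<not> msat W v w (head r)}"

definition rank_vec :: "'p rule set \<Rightarrow> 'w set \<Rightarrow> ('w \<Rightarrow> 'p \<Rightarrow> bool) \<Rightarrow> 'w \<Rightarrow> nat list" where
  "rank_vec Rn W v w = map (\<lambda>i. card (Dlt Rn i \<inter> falsified Rn W v w)) (rev [0..<stab Rn])"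

definition lex_le :: "nat list \<Rightarrow> nat list \<Rightarrow> bool" where
  "lex_le xs ys = (xs = ys \<or> (\<exists>k. k < length xs \<and> k < length ys \<and>
                     take k xs = take k ys \<and> xs ! k < ys ! k))"

definition norm_ge :: "'p rule set \<Rightarrow> 'w set \<Rightarrow> ('w \<Rightarrow> 'p \<Rightarrow> bool) \<Rightarrow> 'w \<Rightarrow> 'w \<Rightarrow> bool" where
  "norm_ge Rn W v w1 w2 = lex_le (rank_vec Rn W v w1) (rank_vec Rn W v w2)"

definition viol :: "'p form set \<Rightarrow> 'p rule set \<Rightarrow> 'w set \<Rightarrow> ('w \<Rightarrow> 'p \<Rightarrow> bool) \<Rightarrow> 'w \<Rightarrow> 'p rule set" where
  "viol \<Gamma> Ro W v w = {ri \<in> Ro. msat W v w (body ri) \<and> \<not> msat W v w (head ri) \<and>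
      (\<forall>rj\<in>Ro. overrides \<Gamma> rj ri \<longrightarrow> \<not> msat W v w (body rj))}"

definition ideal_ge :: "'p form set \<Rightarrow> 'p rule set \<Rightarrow> 'w set \<Rightarrow> ('w \<Rightarrow> 'p \<Rightarrow> bool) \<Rightarrow> 'w \<Rightarrow> 'w \<Rightarrow> bool" where
  "ideal_ge \<Gamma> Ro W v w1 w2 = (viol \<Gamma> Ro W v w1 \<subseteq> viol \<Gamma> Ro W v w2)"

definition maxs :: "('w \<Rightarrow> 'w \<Rightarrow> bool) \<Rightarrow> 'w set \<Rightarrow> 'w set" where
  "maxs ge X = {w \<in> X. \<forall>u\<in>X. ge u w \<longrightarrow> ge w u}"

definition lift :: "('w \<Rightarrow> 'w \<Rightarrow> bool) \<Rightarrow> 'w set \<Rightarrow> 'w set \<Rightarrow> bool" where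
  "lift ge U U' = (\<forall>u'\<in>U'. \<exists>u\<in>U. ge u u')"

definition ext :: "'w set \<Rightarrow> ('w \<Rightarrow> 'p \<Rightarrow> bool) \<Rightarrow> 'p form \<Rightarrow> 'w set" where
  "ext W v \<phi> = {w \<in> W. msat W v w \<phi>}"

text \<open>Obl B A stands for O(B/A).\<close>
datatype 'p dform = Fm "'p form" | Obl "'p form" "'p form"

fun dsat :: "'p form set \<Rightarrow> 'p rule set \<Rightarrow> 'p rule set \<Rightarrow> 'w set \<Rightarrow> ('w \<Rightarrow> 'p \<Rightarrow> bool)
              \<Rightarrow> 'w \<Rightarrow> 'p dform \<Rightarrow> bool" where
  "dsat \<Gamma> Rn Ro W v w (Fm \<phi>) = msat W v w \<phi>"
| "dsat \<Gamma> Rn Ro W v w (Obl B A) =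
     (\<not> lift (ideal_ge \<Gamma> Ro W v)
            (maxs (norm_ge Rn W v) (ext W v (Conj A (Neg B))))
            (maxs (norm_ge Rn W v) (ext W v (Conj A B))))"

text \<open>Delta |~ phi, relative to R-ordered models whose worlds have type 'w
  (the theorem is stated for an arbitrary world type).\<close>
definition nm_conseq :: "'w itself \<Rightarrow> 'p form set \<Rightarrow> 'p rule set \<Rightarrow> 'p rule set \<Rightarrow> 'p dform \<Rightarrow> bool" where
  "nm_conseq _ \<Gamma> Rn Ro \<phi> = (\<forall>(W :: 'w set) (v :: 'w \<Rightarrow> 'p \<Rightarrow> bool). W \<noteq> {} \<longrightarrow>
      (\<forall>w\<in>W. (\<forall>\<gamma>\<in>\<Gamma>. msat W v w \<gamma>) \<longrightarrow> dsat \<Gamma> Rn Ro W v w \<phi>))"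

end

theory Submission
  imports Defs "HOL-Library.List_Lexorder"
begin

text \<open>An obligation O(B/A) that nothing overrides is violated at every world satisfying
  A \<and> \<not>B and at no world satisfying B. The hypothesis \<open>Dia (Conj A B) \<in> \<Gamma>\<close> supplies an
  A \<and> B world, and since there are only finitely many rank vectors, a most normal A \<and> B world
  exists. It does not violate O(B/A) while every most normal A \<and> \<not>B world does, so none
  of the latter is ideally at least as good as it.\<close>

lemma lex_le_if_less_eq:
  fixes xs ys :: "nat list"
  assumes "xs \<le> ys" and "length xs = length ys"
  shows "lex_le xs ys"
proof (cases "xs = ys")
  case False
  with assms(1) have "(xs, ys) \<in> lexord {(a, b). a < b}"
    by (simp add: list_le_def list_less_def)
  with assms(2) obtain k where "k < length xs" "take k xs = take k ys" "xs ! k < ys ! k"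
    by (auto simp: lexord_take_index_conv)
  with assms(2) show ?thesis
    unfolding lex_le_def by auto
qed (simp add: lex_le_def)

lemma finite_rank_vec_image:
  assumes "finite Rn"
  shows "finite (rank_vec Rn W v ` X)"
proof (rule finite_subset)
  have "card (Dlt Rn i \<inter> falsified Rn W v w) \<le> card Rn" for i w
    by (rule card_mono[OF assms]) (auto simp: falsified_def)
  then show "rank_vec Rn W v ` X \<subseteq> {xs. set xs \<subseteq> {0..card Rn} \<and> length xs = stab Rn}"
    by (auto simp: rank_vec_def)
  show "finite {xs. set xs \<subseteq> {0..card Rn} \<and> length xs = stab Rn}"
    by (rule finite_lists_length_eq) simp
qed

lemma maxs_norm_ge_nonempty:
  assumes "finite Rn" and "X \<noteq> {}"
  shows "maxs (norm_ge Rn W v) X \<noteq> {}"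
proof -
  let ?R = "rank_vec Rn W v ` X"
  have "Min ?R \<in> ?R"
    using finite_rank_vec_image[OF assms(1)] assms(2) by (intro Min_in) auto
  then obtain w where w: "w \<in> X" "rank_vec Rn W v w = Min ?R"
    by auto
  have "norm_ge Rn W v w u" if "u \<in> X" for u
    unfolding norm_ge_def
  proof (rule lex_le_if_less_eq)
    show "rank_vec Rn W v w \<le> rank_vec Rn W v u"
      using w(2) finite_rank_vec_image[OF assms(1), of W v X] that by simp
  qed (simp add: rank_vec_def)
  with w(1) have "w \<in> maxs (norm_ge Rn W v) X"
    by (simp add: maxs_def)
  then show ?thesis
    by blast
qed

lemma not_overridden_in_viol_iff:
  assumes "r \<in> Ro" and "\<not> (\<exists>r'\<in>Ro. overrides \<Gamma> r' r)"
  shows "r \<in> viol \<Gamma> Ro W v w \<longleftrightarrow> msat W v w (body r) \<and> \<not> msat W v w (head r)"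
  using assms by (auto simp: viol_def)

lemma dsat_Obl_if_not_overridden:
  assumes "(A, B) \<in> Ro" and "\<not> (\<exists>r\<in>Ro. overrides \<Gamma> r (A, B))"
    and "maxs (norm_ge Rn W v) (ext W v (Conj A B)) \<noteq> {}"
  shows "dsat \<Gamma> Rn Ro W v w (Obl B A)"
proof -
  obtain u' where u': "u' \<in> maxs (norm_ge Rn W v) (ext W v (Conj A B))"
    using assms(3) by blast
  then have "(A, B) \<notin> viol \<Gamma> Ro W v u'"
    using not_overridden_in_viol_iff[OF assms(1,2), of W v u'] by (simp add: maxs_def ext_def)
  moreover have "(A, B) \<in> viol \<Gamma> Ro W v u"
    if "u \<in> maxs (norm_ge Rn W v) (ext W v (Conj A (Neg B)))" for u
    using that not_overridden_in_viol_iff[OF assms(1,2), of W v u] by (simp add: maxs_def ext_def)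
  ultimately show ?thesis
    using u' by (auto simp: lift_def ideal_ge_def)
qed

theorem proposition7:
  fixes \<Gamma> :: "'p form set" and Rn Ro :: "'p rule set" and A B :: "'p form"
  assumes "finite \<Gamma>" and "finite Rn" and "finite Ro"
    and "coherent Rn"
    and "\<forall>r\<in>Rn. boolean (body r) \<and> boolean (head r)"
    and "\<forall>r\<in>Ro. boolean (body r) \<and> boolean (head r)"
    and "boolean A" and "boolean B"
    and "(A, B) \<in> Ro"
    and "\<not> (\<exists>r\<in>Ro. overrides \<Gamma> r (A, B))"
    and "Dia (Conj A B) \<in> \<Gamma>"
  shows "nm_conseq TYPE('w) \<Gamma> Rn Ro (Obl B A)"
  unfolding nm_conseq_def
proof (intro allI impI ballI)
  fix W :: "'w set" and v w
  assume "w \<in> W" and "\<forall>\<gamma>\<in>\<Gamma>. msat W v w \<gamma>"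
  with assms(11) have "msat W v w (Dia (Conj A B))"
    by blast
  then have "ext W v (Conj A B) \<noteq> {}"
    by (auto simp: Dia_def ext_def)
  then have "maxs (norm_ge Rn W v) (ext W v (Conj A B)) \<noteq> {}"
    using assms(2) by (rule maxs_norm_ge_nonempty[rotated])
  with assms(9,10) show "dsat \<Gamma> Rn Ro W v w (Obl B A)"
    by (rule dsat_Obl_if_not_overridden)
qed

end
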